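(* Let $\alpha\colon S\to\mathcal I(X)$ be a representation of a countable discrete inverse semigroup $S$ with identity, and let $A\subseteq X$ be $S$-domain F\o lner. Then for every $\varepsilon>0$ and finite $\mathcal F\subseteq S$ there is a finite non-empty $F_0\subseteq A$ consisting of a single $\approx$-equivalence class (i.e. $u\approx v$ for all $u,v\in F_0$) such that $|\alpha_s(F_0\cap D_{s^*s})\setminus F_0|<\varepsilon|F_0|$ for all $s\in\mathcal F$.
   Context: Inverse semigroup: each $s$ has a unique $s^*$ with $ss^*s=s$, $s^*ss^*=s^*$. A representation is a unital homomorphism $\alpha\colon S\to\mathcal I(X)$ into partial bijections of $X$; $D_{s^*s}$ is the domain of $\alpha_s$. For $u,v\in X$, $u\approx v$ iff there is $s\in S$ with $u\in D_{s^*s}$ and $\alpha_s(u)=v$ (an equivalence relation). $A$ is $S$-domain F\o lner if there are finite non-empty $F_n\subseteq A$ with $|\alpha_s(F_n\cap D_{s^*s})\setminus F_n|/|F_n|\to0$ for every $s\in S$. *)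

theory Defs
  imports Complex_Main "HOL-Library.Countable_Set"
begin

definition inverse_monoid :: "('s \<Rightarrow> 's \<Rightarrow> 's) \<Rightarrow> 's \<Rightarrow> bool" where
  "inverse_monoid mult e \<longleftrightarrow>
     (\<forall>a b c. mult (mult a b) c = mult a (mult b c)) \<and>
     (\<forall>a. mult e a = a \<and> mult a e = a) \<and>
     (\<forall>s. \<exists>!t. mult (mult s t) s = s \<and> mult (mult t s) t = t)"

definition istar :: "('s \<Rightarrow> 's \<Rightarrow> 's) \<Rightarrow> 's \<Rightarrow> 's" where
  "istar mult s = (THE t. mult (mult s t) s = s \<and> mult (mult t s) t = t)"

definition partial_bij :: "'x set \<Rightarrow> ('x \<Rightarrow> 'x option) \<Rightarrow> bool" where
  "partial_bij X f \<longleftrightarrow> dom f \<subseteq> X \<and> ran f \<subseteq> X \<and> inj_on f (dom f)"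

definition representation ::
  "('s \<Rightarrow> 's \<Rightarrow> 's) \<Rightarrow> 's \<Rightarrow> 'x set \<Rightarrow> ('s \<Rightarrow> 'x \<Rightarrow> 'x option) \<Rightarrow> bool" where
  "representation mult e X \<alpha> \<longleftrightarrow>
     (\<forall>s. partial_bij X (\<alpha> s)) \<and>
     (\<forall>s t. \<alpha> (mult s t) = (\<alpha> s \<circ>\<^sub>m \<alpha> t)) \<and>
     \<alpha> e = (\<lambda>x. if x \<in> X then Some x else None)"

definition Dom :: "('s \<Rightarrow> 'x \<Rightarrow> 'x option) \<Rightarrow> 's \<Rightarrow> 'x set" where
  "Dom \<alpha> e = dom (\<alpha> e)"

definition pimage :: "('x \<Rightarrow> 'x option) \<Rightarrow> 'x set \<Rightarrow> 'x set" where
  "pimage f B = {y. \<exists>x\<in>B. f x = Some y}"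

definition orbit_rel ::
  "('s \<Rightarrow> 's \<Rightarrow> 's) \<Rightarrow> ('s \<Rightarrow> 'x \<Rightarrow> 'x option) \<Rightarrow> 'x \<Rightarrow> 'x \<Rightarrow> bool" where
  "orbit_rel mult \<alpha> u v \<longleftrightarrow>
     (\<exists>s. u \<in> Dom \<alpha> (mult (istar mult s) s) \<and> \<alpha> s u = Some v)"

definition domain_folner ::
  "('s \<Rightarrow> 's \<Rightarrow> 's) \<Rightarrow> ('s \<Rightarrow> 'x \<Rightarrow> 'x option) \<Rightarrow> 'x set \<Rightarrow> bool" where
  "domain_folner mult \<alpha> A \<longleftrightarrow>
     (\<exists>F :: nat \<Rightarrow> 'x set. (\<forall>n. finite (F n) \<and> F n \<noteq> {} \<and> F n \<subseteq> A) \<and>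
        (\<forall>s. (\<lambda>n. real (card (pimage (\<alpha> s) (F n \<inter> Dom \<alpha> (mult (istar mult s) s)) - F n))
                   / real (card (F n))) \<longlonglongrightarrow> 0))"

end

theory Submission
  imports Defs
begin

text \<open>Take a F\<o>lner set G whose boundaries, summed over the finitely many s \<in> \<F>, have
  size less than \<epsilon>|G|, and cut G into the classes of the orbit relation restricted to G.
  Since the \<alpha>_s are injective and a point of G mapped into G stays in its own class,
  the boundaries of the classes are disjoint pieces of the boundary of G.  Hence the
  boundary sums of the classes add up to at most that of G, while their sizes add up
  to |G|, so some class has total boundary less than \<epsilon> times its size.\<close>

lemma mult_istar_mult:
  assumes "inverse_monoid mult e"
  shows "mult (mult s (istar mult s)) s = s"
proof -
  have "\<exists>!t. mult (mult s t) s = s \<and> mult (mult t s) t = t"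
    using assms unfolding inverse_monoid_def by blast
  from theI'[OF this] show ?thesis unfolding istar_def by blast
qed

lemma representation_inj_on:
  "representation mult e X \<alpha> \<Longrightarrow> inj_on (\<alpha> s) (dom (\<alpha> s))"
  unfolding representation_def partial_bij_def by blast

lemma representation_mult:
  "representation mult e X \<alpha> \<Longrightarrow> \<alpha> (mult s t) = \<alpha> s \<circ>\<^sub>m \<alpha> t"
  unfolding representation_def by blast

lemma representation_unit:
  "representation mult e X \<alpha> \<Longrightarrow> u \<in> X \<Longrightarrow> \<alpha> e u = Some u"
  unfolding representation_def by simp

lemma representation_istar_inverse:
  assumes im: "inverse_monoid mult e" and rep: "representation mult e X \<alpha>"
    and uv: "\<alpha> s u = Some v"
  shows "\<alpha> (istar mult s) v = Some u"
proof -
  have "\<alpha> s = \<alpha> s \<circ>\<^sub>m \<alpha> (istar mult s) \<circ>\<^sub>m \<alpha> s"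
    using mult_istar_mult[OF im, of s] representation_mult[OF rep] by metis
  then have "(\<alpha> s \<circ>\<^sub>m \<alpha> (istar mult s)) v = Some v"
    using uv by (metis map_comp_simps(2))
  then obtain w where w: "\<alpha> (istar mult s) v = Some w" "\<alpha> s w = Some v"
    by (auto simp: map_comp_def split: option.splits)
  with uv representation_inj_on[OF rep, of s] have "w = u"
    by (auto simp: inj_on_def dom_def)
  with w show ?thesis by simp
qed

lemma Dom_istar_mult:
  assumes im: "inverse_monoid mult e" and rep: "representation mult e X \<alpha>"
  shows "Dom \<alpha> (mult (istar mult s) s) = dom (\<alpha> s)"
  using representation_istar_inverse[OF im rep]
  by (auto simp: Dom_def representation_mult[OF rep] map_comp_def split: option.splits)

lemma orbit_rel_iff:
  assumes "inverse_monoid mult e" and "representation mult e X \<alpha>"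
  shows "orbit_rel mult \<alpha> u v \<longleftrightarrow> (\<exists>s. \<alpha> s u = Some v)"
  unfolding orbit_rel_def Dom_istar_mult[OF assms] by blast

lemma equiv_orbit_rel_on:
  assumes im: "inverse_monoid mult e" and rep: "representation mult e X \<alpha>"
    and "G \<subseteq> X"
  shows "equiv G {(u, v). u \<in> G \<and> v \<in> G \<and> orbit_rel mult \<alpha> u v}"
proof (rule equivI)
  have "orbit_rel mult \<alpha> u u" if "u \<in> G" for u
    using representation_unit[OF rep] that \<open>G \<subseteq> X\<close> orbit_rel_iff[OF im rep] by blast
  then show "refl_on G {(u, v). u \<in> G \<and> v \<in> G \<and> orbit_rel mult \<alpha> u v}"
    by (auto simp: refl_on_def)
  show "sym {(u, v). u \<in> G \<and> v \<in> G \<and> orbit_rel mult \<alpha> u v}"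
    using representation_istar_inverse[OF im rep]
    by (auto simp: sym_def orbit_rel_iff[OF im rep])
  have "\<alpha> (mult t s) u = Some w" if "\<alpha> s u = Some v" "\<alpha> t v = Some w" for s t u v w
    using that by (simp add: representation_mult[OF rep])
  then show "trans {(u, v). u \<in> G \<and> v \<in> G \<and> orbit_rel mult \<alpha> u v}"
    unfolding trans_def orbit_rel_iff[OF im rep] by blast
qed auto

lemma pimage_Int_dom: "pimage f (B \<inter> dom f) = pimage f B"
  by (auto simp: pimage_def)

lemma finite_pimage:
  assumes "finite B"
  shows "finite (pimage f B)"
proof -
  have "pimage f B \<subseteq> (\<lambda>x. the (f x)) ` B" by (force simp: pimage_def)
  with assms show ?thesis by (meson finite_imageI finite_subset)
qed

lemma sum_card_boundary_quotient_le:
  assumes inj: "inj_on f (dom f)" and fin: "finite G" and R: "equiv G R"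
    and respects: "\<And>x y. x \<in> G \<Longrightarrow> y \<in> G \<Longrightarrow> f x = Some y \<Longrightarrow> (x, y) \<in> R"
  shows "(\<Sum>Q\<in>G//R. card (pimage f Q - Q)) \<le> card (pimage f G - G)"
proof -
  have sub: "pimage f Q - Q \<subseteq> pimage f G - G" if Q: "Q \<in> G//R" for Q
  proof
    fix y assume "y \<in> pimage f Q - Q"
    then obtain x where x: "x \<in> Q" "f x = Some y" "y \<notin> Q" by (auto simp: pimage_def)
    have "x \<in> G" using in_quotient_imp_subset[OF R Q] x(1) by blast
    moreover have "y \<notin> G"
      using respects[OF \<open>x \<in> G\<close> _ x(2)] in_quotient_imp_closed[OF R Q x(1)] x(3) by blast
    ultimately show "y \<in> pimage f G - G" using x(2) by (auto simp: pimage_def)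
  qed
  have disj: "(pimage f Q1 - Q1) \<inter> (pimage f Q2 - Q2) = {}"
    if "Q1 \<in> G//R" "Q2 \<in> G//R" "Q1 \<noteq> Q2" for Q1 Q2
  proof -
    have "x1 = x2" if "f x1 = Some y" "f x2 = Some y" for x1 x2 y
      using inj that by (auto simp: inj_on_def dom_def)
    then have "pimage f Q1 \<inter> pimage f Q2 \<subseteq> pimage f (Q1 \<inter> Q2)"
      by (auto simp: pimage_def)
    moreover have "Q1 \<inter> Q2 = {}" using quotient_disj[OF R] that by blast
    ultimately show ?thesis by (auto simp: pimage_def)
  qed
  have finB: "finite (pimage f G - G)" using finite_pimage[OF fin] by blast
  have "(\<Sum>Q\<in>G//R. card (pimage f Q - Q)) = card (\<Union>Q\<in>G//R. pimage f Q - Q)"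
    using finite_quotient[OF fin equiv_type[OF R]] sub disj finite_subset[OF _ finB]
    by (intro card_UN_disjoint[symmetric]) auto
  also have "\<dots> \<le> card (pimage f G - G)"
    using sub by (intro card_mono[OF finB]) blast
  finally show ?thesis .
qed

lemma sum_less_sum_imp_ex_less:
  fixes a b :: "'i \<Rightarrow> 'a::{ordered_comm_monoid_add, linorder}"
  assumes "sum a I < sum b I"
  obtains i where "i \<in> I" "a i < b i"
proof -
  have "\<not> (\<forall>i\<in>I. b i \<le> a i)"
    using sum_mono[of I b a] assms by (meson leD)
  with that show thesis by (meson linorder_not_le)
qed

lemma card_eq_sum_card_quotient:
  assumes "finite G" and "equiv G R"
  shows "card G = (\<Sum>Q\<in>G//R. card Q)"
proof -
  have "finite Q" if "Q \<in> G//R" for Q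
    using in_quotient_imp_subset[OF assms(2) that] finite_subset assms(1) by blast
  then have "card (\<Union>(G//R)) = (\<Sum>Q\<in>G//R. card Q)"
    using quotient_disj[OF assms(2)]
    by (intro card_Union_disjoint) (auto simp: pairwise_def disjnt_def)
  then show ?thesis using Union_quotient[OF assms(2)] by simp
qed

lemma quotient_class_small_total_boundary:
  fixes \<epsilon> :: real
  assumes inj: "\<And>s. s \<in> \<F> \<Longrightarrow> inj_on (f s) (dom (f s))"
    and fin: "finite G" and R: "equiv G R"
    and respects: "\<And>s x y. s \<in> \<F> \<Longrightarrow> x \<in> G \<Longrightarrow> y \<in> G \<Longrightarrow> f s x = Some y \<Longrightarrow> (x, y) \<in> R"
    and small: "(\<Sum>s\<in>\<F>. real (card (pimage (f s) G - G))) < \<epsilon> * real (card G)"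
  obtains Q where "Q \<in> G//R"
    and "(\<Sum>s\<in>\<F>. real (card (pimage (f s) Q - Q))) < \<epsilon> * real (card Q)"
proof -
  have "(\<Sum>Q\<in>G//R. \<Sum>s\<in>\<F>. real (card (pimage (f s) Q - Q)))
      = (\<Sum>s\<in>\<F>. real (\<Sum>Q\<in>G//R. card (pimage (f s) Q - Q)))"
    by (subst sum.swap) simp
  also have "\<dots> \<le> (\<Sum>s\<in>\<F>. real (card (pimage (f s) G - G)))"
  proof (rule sum_mono)
    fix s assume "s \<in> \<F>"
    from sum_card_boundary_quotient_le[OF inj[OF this] fin R respects[OF this]]
    show "real (\<Sum>Q\<in>G//R. card (pimage (f s) Q - Q)) \<le> real (card (pimage (f s) G - G))"
      by (simp only: of_nat_le_iff)
  qed
  also have "\<dots> < \<epsilon> * real (card G)" by (fact small)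
  also have "\<dots> = (\<Sum>Q\<in>G//R. \<epsilon> * real (card Q))"
    by (simp add: card_eq_sum_card_quotient[OF fin R] sum_distrib_left)
  finally show thesis
    by (rule sum_less_sum_imp_ex_less) (rule that)
qed

lemma domain_folner_small_total_boundary:
  fixes \<epsilon> :: real
  assumes "domain_folner mult \<alpha> A" and "finite \<F>" and "\<epsilon> > 0"
  obtains G where "finite G" "G \<noteq> {}" "G \<subseteq> A"
    and "(\<Sum>s\<in>\<F>. real (card (pimage (\<alpha> s) (G \<inter> Dom \<alpha> (mult (istar mult s) s)) - G)))
           < \<epsilon> * real (card G)"
proof -
  obtain F where F: "\<And>n. finite (F n) \<and> F n \<noteq> {} \<and> F n \<subseteq> A"
    and lim: "\<And>s. (\<lambda>n. real (card (pimage (\<alpha> s) (F n \<inter> Dom \<alpha> (mult (istar mult s) s)) - F n))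
                   / real (card (F n))) \<longlonglongrightarrow> 0"
    using assms(1) unfolding domain_folner_def by blast
  have "(\<lambda>n. \<Sum>s\<in>\<F>. real (card (pimage (\<alpha> s) (F n \<inter> Dom \<alpha> (mult (istar mult s) s)) - F n))
                   / real (card (F n))) \<longlonglongrightarrow> 0"
    by (rule tendsto_null_sum) (rule lim)
  from order_tendstoD(2)[OF this assms(3)] obtain n where
    n: "(\<Sum>s\<in>\<F>. real (card (pimage (\<alpha> s) (F n \<inter> Dom \<alpha> (mult (istar mult s) s)) - F n))
                   / real (card (F n))) < \<epsilon>"
    by (auto simp: eventually_sequentially)
  have "real (card (F n)) > 0" using F[of n] by (simp add: card_gt_0_iff)
  with n F[of n] show thesis
    by (intro that[of "F n"]) (auto simp: pos_divide_less_eq simp flip: sum_divide_distrib)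
qed

theorem mainTheorem17:
  fixes mult :: "'s \<Rightarrow> 's \<Rightarrow> 's" and e :: 's
    and X :: "'x set" and \<alpha> :: "'s \<Rightarrow> 'x \<Rightarrow> 'x option" and A :: "'x set"
  assumes "inverse_monoid mult e"
    and "countable (UNIV :: 's set)"
    and "representation mult e X \<alpha>"
    and "A \<subseteq> X"
    and "domain_folner mult \<alpha> A"
  shows "\<forall>\<epsilon>::real. \<epsilon> > 0 \<longrightarrow> (\<forall>\<F>. finite \<F> \<longrightarrow>
           (\<exists>F0. finite F0 \<and> F0 \<noteq> {} \<and> F0 \<subseteq> A \<and>
              (\<forall>u\<in>F0. \<forall>v\<in>F0. orbit_rel mult \<alpha> u v) \<and>
              (\<forall>s\<in>\<F>. real (card (pimage (\<alpha> s) (F0 \<inter> Dom \<alpha> (mult (istar mult s) s)) - F0))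
                        < \<epsilon> * real (card F0))))"
proof (intro allI impI)
  note im = assms(1) and rep = assms(3)
  fix \<epsilon> :: real and \<F> :: "'s set"
  assume "\<epsilon> > 0" and "finite \<F>"
  obtain G where G: "finite G" "G \<noteq> {}" "G \<subseteq> A"
    and small: "(\<Sum>s\<in>\<F>. real (card (pimage (\<alpha> s) G - G))) < \<epsilon> * real (card G)"
    using domain_folner_small_total_boundary[OF assms(5) \<open>finite \<F>\<close> \<open>\<epsilon> > 0\<close>]
    by (auto simp: Dom_istar_mult[OF im rep] pimage_Int_dom)
  define R where "R = {(u, v). u \<in> G \<and> v \<in> G \<and> orbit_rel mult \<alpha> u v}"
  have R: "equiv G R"
    unfolding R_def using equiv_orbit_rel_on[OF im rep] G(3) assms(4) by blast
  obtain Q where Q: "Q \<in> G//R"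
    and Q_small: "(\<Sum>s\<in>\<F>. real (card (pimage (\<alpha> s) Q - Q))) < \<epsilon> * real (card Q)"
    by (rule quotient_class_small_total_boundary[OF representation_inj_on[OF rep] G(1) R _ small])
      (auto simp: R_def orbit_rel_iff[OF im rep])
  have "real (card (pimage (\<alpha> s) Q - Q)) < \<epsilon> * real (card Q)" if "s \<in> \<F>" for s
    using member_le_sum[OF that, of "\<lambda>s. real (card (pimage (\<alpha> s) Q - Q))"] \<open>finite \<F>\<close> Q_small
    by simp
  moreover have "finite Q" "Q \<noteq> {}" "Q \<subseteq> A"
    using in_quotient_imp_subset[OF R Q] in_quotient_imp_non_empty[OF R Q] G finite_subset by auto
  moreover have "orbit_rel mult \<alpha> u v" if "u \<in> Q" "v \<in> Q" for u v
    using in_quotient_imp_in_rel[OF R Q, of u v] that by (simp add: R_def)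
  ultimately show "\<exists>F0. finite F0 \<and> F0 \<noteq> {} \<and> F0 \<subseteq> A \<and>
              (\<forall>u\<in>F0. \<forall>v\<in>F0. orbit_rel mult \<alpha> u v) \<and>
              (\<forall>s\<in>\<F>. real (card (pimage (\<alpha> s) (F0 \<inter> Dom \<alpha> (mult (istar mult s) s)) - F0))
                        < \<epsilon> * real (card F0))"
    by (intro exI[of _ Q]) (auto simp: Dom_istar_mult[OF im rep] pimage_Int_dom)
qed

end
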